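(* Let $p$ be a prime and let $K$ be a spherically complete non-Archimedean field whose residue field $k$ has characteristic $p$. Assume that (i) the value group $\Gamma=|K^\times|$ is $p$-divisible, and (ii) the residue field $k$ is perfect. Then $K$ is a perfectoid field.
   Context: A non-Archimedean field is a field complete with respect to a nontrivial rank-one (real-valued) non-Archimedean absolute value $|\cdot|$. It is spherically complete if every decreasing sequence of closed balls has nonempty intersection. A perfectoid field is a non-Archimedean field $K$ with non-discrete value group, residue characteristic $p$, such that the Frobenius $x\mapsto x^p$ is surjective on $\mathcal{O}_K/p$, where $\mathcal{O}_K=\{x:|x|\le1\}$. *)

theory Defs
  imports Complex_Main "HOL-Computational_Algebra.Primes"
begin

text \<open>A field K (the whole type 'a) equipped with a real-valued absolute value v.\<close>

definition nonarch_abs :: "('a::field \<Rightarrow> real) \<Rightarrow> bool" where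
  "nonarch_abs v \<longleftrightarrow>
     (\<forall>x. v x \<ge> 0) \<and> (\<forall>x. v x = 0 \<longleftrightarrow> x = 0) \<and>
     (\<forall>x y. v (x * y) = v x * v y) \<and>
     (\<forall>x y. v (x + y) \<le> max (v x) (v y))"

definition nontrivial_abs :: "('a::field \<Rightarrow> real) \<Rightarrow> bool" where
  "nontrivial_abs v \<longleftrightarrow> (\<exists>x. x \<noteq> 0 \<and> v x \<noteq> 1)"

definition abs_cauchy :: "('a::field \<Rightarrow> real) \<Rightarrow> (nat \<Rightarrow> 'a) \<Rightarrow> bool" where
  "abs_cauchy v f \<longleftrightarrow> (\<forall>e>0. \<exists>N. \<forall>m\<ge>N. \<forall>n\<ge>N. v (f m - f n) < e)"

definition abs_converges :: "('a::field \<Rightarrow> real) \<Rightarrow> (nat \<Rightarrow> 'a) \<Rightarrow> bool" where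
  "abs_converges v f \<longleftrightarrow> (\<exists>L. \<forall>e>0. \<exists>N. \<forall>n\<ge>N. v (f n - L) < e)"

definition abs_complete :: "('a::field \<Rightarrow> real) \<Rightarrow> bool" where
  "abs_complete v \<longleftrightarrow> (\<forall>f. abs_cauchy v f \<longrightarrow> abs_converges v f)"

definition nonarch_field :: "('a::field \<Rightarrow> real) \<Rightarrow> bool" where
  "nonarch_field v \<longleftrightarrow> nonarch_abs v \<and> nontrivial_abs v \<and> abs_complete v"

definition closed_ball_v :: "('a::field \<Rightarrow> real) \<Rightarrow> 'a \<Rightarrow> real \<Rightarrow> 'a set" where
  "closed_ball_v v c r = {y. v (y - c) \<le> r}"

definition spherically_complete :: "('a::field \<Rightarrow> real) \<Rightarrow> bool" where
  "spherically_complete v \<longleftrightarrow>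
     (\<forall>(c::nat \<Rightarrow> 'a) (r::nat \<Rightarrow> real).
        (\<forall>n. r n > 0) \<longrightarrow>
        (\<forall>n. closed_ball_v v (c (Suc n)) (r (Suc n)) \<subseteq> closed_ball_v v (c n) (r n)) \<longrightarrow>
        (\<Inter>n. closed_ball_v v (c n) (r n)) \<noteq> {})"

text \<open>Valuation ring O = {x. v x \<le> 1}, maximal ideal m = {x. v x < 1}, residue field k = O/m.\<close>

text \<open>Residue field has characteristic p (p prime): p * 1 lies in the maximal ideal.\<close>
definition residue_char :: "('a::field \<Rightarrow> real) \<Rightarrow> nat \<Rightarrow> bool" where
  "residue_char v p \<longleftrightarrow> v (of_nat p) < 1"

definition value_group :: "('a::field \<Rightarrow> real) \<Rightarrow> real set" where
  "value_group v = {v x | x. x \<noteq> 0}"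

definition value_group_p_divisible :: "('a::field \<Rightarrow> real) \<Rightarrow> nat \<Rightarrow> bool" where
  "value_group_p_divisible v p \<longleftrightarrow> (\<forall>g\<in>value_group v. \<exists>h\<in>value_group v. h ^ p = g)"

text \<open>Residue field (of characteristic p) perfect: Frobenius surjective on O/m.\<close>
definition residue_field_perfect :: "('a::field \<Rightarrow> real) \<Rightarrow> nat \<Rightarrow> bool" where
  "residue_field_perfect v p \<longleftrightarrow>
     (\<forall>x. v x \<le> 1 \<longrightarrow> (\<exists>y. v y \<le> 1 \<and> v (y ^ p - x) < 1))"

definition value_group_nondiscrete :: "('a::field \<Rightarrow> real) \<Rightarrow> bool" where
  "value_group_nondiscrete v \<longleftrightarrow>
     (\<forall>e>0. \<exists>g\<in>value_group v. g \<noteq> 1 \<and> \<bar>g - 1\<bar> < e)"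

text \<open>Frobenius surjective on O/pO: x \<equiv> y^p mod pO, i.e. v(y^p - x) \<le> v p.\<close>
definition frobenius_surj_mod_p :: "('a::field \<Rightarrow> real) \<Rightarrow> nat \<Rightarrow> bool" where
  "frobenius_surj_mod_p v p \<longleftrightarrow>
     (\<forall>x. v x \<le> 1 \<longrightarrow> (\<exists>y. v y \<le> 1 \<and> v (y ^ p - x) \<le> v (of_nat p)))"

definition perfectoid_field :: "('a::field \<Rightarrow> real) \<Rightarrow> bool" where
  "perfectoid_field v \<longleftrightarrow>
     nonarch_field v \<and> value_group_nondiscrete v \<and>
     (\<exists>p. prime p \<and> residue_char v p \<and> frobenius_surj_mod_p v p)"

end

theory Submission
  imports Defs
begin

text \<open>
  Since the binomial coefficients p choose k, 0 < k < p, are divisible by p, the Frobenius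
  y \<mapsto> y^p is additive on O modulo p. Fix x \<in> O and measure how well x is
  approximated by p-th powers, by the errors |x - y^p| for y \<in> O. Spherical completeness
  yields an approximation z whose error is optimal up to |p|: take centres with errors
  tending to the infimum; by additivity of Frobenius they form a nested sequence of balls.
  On the other hand, an error r > |p| can always be decreased: by p-divisibility of the
  value group write r = |c|^p, and by perfectness of the residue field the unit
  (x - z^p)/c^p is a p-th power modulo the maximal ideal. Hence the optimal error is at most |p|.
  Non-discreteness holds because the iterated p-th roots of a value different from 1
  are values different from 1 that tend to 1.
\<close>

lemma le_real_root_iff_power_le: "0 < n \<Longrightarrow> 0 \<le> a \<Longrightarrow> a \<le> root n b \<longleftrightarrow> a ^ n \<le> b"
  by (metis real_root_le_iff real_root_power_cancel)

lemma value_group_iterated_root: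
  assumes "value_group_p_divisible v p" "g \<in> value_group v"
  shows "\<exists>h\<in>value_group v. h ^ (p ^ n) = g"
proof (induction n)
  case 0
  then show ?case using assms(2) by auto
next
  case (Suc n)
  then obtain h where h: "h \<in> value_group v" "h ^ (p ^ n) = g" by blast
  then obtain h' where "h' \<in> value_group v" "h' ^ p = h"
    using assms(1) unfolding value_group_p_divisible_def by blast
  then show ?case
    using h(2) by (auto simp: power_mult)
qed

locale ultrametric_field =
  fixes v :: "'a::field \<Rightarrow> real"
  assumes nonarch_abs: "nonarch_abs v"
begin

lemma v_nonneg: "v x \<ge> 0"
  using nonarch_abs by (simp add: nonarch_abs_def)

lemma v_eq_0_iff: "v x = 0 \<longleftrightarrow> x = 0"
  using nonarch_abs by (simp add: nonarch_abs_def)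

lemma v_mult: "v (x * y) = v x * v y"
  using nonarch_abs by (simp add: nonarch_abs_def)

lemma v_add_le: "v (x + y) \<le> max (v x) (v y)"
  using nonarch_abs by (simp add: nonarch_abs_def)

lemma v_zero [simp]: "v 0 = 0"
  by (simp add: v_eq_0_iff)

lemma v_pos: "x \<noteq> 0 \<Longrightarrow> v x > 0"
  using v_nonneg[of x] v_eq_0_iff[of x] by linarith

lemma v_one: "v 1 = 1"
  using v_mult[of 1 1] v_pos[of 1] by simp

lemma v_minus: "v (- x) = v x"
proof -
  have "v (- 1) ^ 2 = 1"
    using v_mult[of "- 1" "- 1"] by (simp add: v_one power2_eq_square)
  then have "v (- 1) = 1"
    using v_nonneg[of "- 1"] power2_eq_1_iff by force
  then show ?thesis
    using v_mult[of "- 1" x] by simp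
qed

lemma v_diff_commute: "v (x - y) = v (y - x)"
  using v_minus[of "y - x"] by simp

lemma v_diff_le: "v (x - y) \<le> max (v x) (v y)"
  using v_add_le[of x "- y"] by (simp add: v_minus)

lemma v_diff_diff_le: "v (x - y - z) \<le> max (v x) (max (v y) (v z))"
  using v_diff_le[of x y] v_diff_le[of "x - y" z] by linarith

lemma v_power: "v (x ^ n) = v x ^ n"
  by (induction n) (simp_all add: v_one v_mult)

lemma v_power_le_1: "v x \<le> 1 \<Longrightarrow> v (x ^ n) \<le> 1"
  by (simp add: v_power v_nonneg power_le_one)

lemma v_of_nat_le_1: "v (of_nat n) \<le> 1"
proof (induction n)
  case 0
  then show ?case by simp
next
  case (Suc n)
  then show ?case
    using v_add_le[of 1 "of_nat n"] by (simp add: v_one)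
qed

lemma v_sum_le:
  assumes "finite A" "\<And>k. k \<in> A \<Longrightarrow> v (f k) \<le> B" "B \<ge> 0"
  shows "v (sum f A) \<le> B"
  using assms
proof (induction A rule: finite_induct)
  case empty
  then show ?case by simp
next
  case (insert a A)
  then show ?case
    by (simp add: order_trans[OF v_add_le])
qed

lemma v_frobenius_add_error_le:
  assumes p: "prime p" and s: "v s \<le> 1" and t: "v t \<le> 1"
  shows "v ((s + t) ^ p - s ^ p - t ^ p) \<le> v (of_nat p)"
proof -
  define g where "g k = of_nat (p choose k) * s ^ k * t ^ (p - k)" for k
  have p0: "p > 0"
    using p prime_gt_0_nat by blast
  have "{..p} = insert 0 (insert p {1..<p})"
    using p0 by auto
  then have "(s + t) ^ p = g 0 + (g p + sum g {1..<p})"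
    unfolding binomial_ring[of s t p] using p0 by (simp add: g_def)
  then have error_eq: "(s + t) ^ p - s ^ p - t ^ p = sum g {1..<p}"
    by (simp add: g_def)
  have "v (g k) \<le> v (of_nat p)" if k: "k \<in> {1..<p}" for k
  proof -
    have "p dvd (p choose k)"
      using k p by (intro dvd_choose_prime) auto
    then obtain m where m: "p choose k = p * m" by blast
    have "v (g k) = v (of_nat p) * (v (of_nat m) * v (s ^ k) * v (t ^ (p - k)))"
      unfolding g_def m by (simp add: v_mult)
    also have "\<dots> \<le> v (of_nat p) * 1"
      using s t by (intro mult_left_mono mult_le_one) (simp_all add: v_nonneg v_of_nat_le_1 v_power_le_1)
    finally show ?thesis by simp
  qed
  then show ?thesis
    unfolding error_eq by (intro v_sum_le) (simp_all add: v_nonneg)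
qed

lemma v_frobenius_diff_error_le:
  assumes "prime p" "v a \<le> 1" "v b \<le> 1"
  shows "v (a ^ p - b ^ p - (a - b) ^ p) \<le> v (of_nat p)"
  using v_frobenius_add_error_le[of p b "a - b"] v_diff_le[of a b] assms by simp

lemma v_diff_pth_power_le:
  assumes "prime p" "v s \<le> 1" "v s' \<le> 1"
  shows "v (s' - s) ^ p \<le> max (v (x - s ^ p)) (max (v (x - s' ^ p)) (v (of_nat p)))"
proof -
  have "(s' - s) ^ p = (x - s ^ p) - (x - s' ^ p) - (s' ^ p - s ^ p - (s' - s) ^ p)"
    by (simp add: algebra_simps)
  then show ?thesis
    using v_diff_diff_le[of "x - s ^ p" "x - s' ^ p" "s' ^ p - s ^ p - (s' - s) ^ p"]
      v_frobenius_diff_error_le[OF assms(1,3,2)]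
    by (simp add: v_power)
qed

lemma v_sub_pth_power_le:
  assumes "prime p" "v s \<le> 1" "v z \<le> 1"
  shows "v (x - z ^ p) \<le> max (v (x - s ^ p)) (max (v (z - s) ^ p) (v (of_nat p)))"
proof -
  have "x - z ^ p = (x - s ^ p) - (z - s) ^ p - (z ^ p - s ^ p - (z - s) ^ p)"
    by (simp add: algebra_simps)
  then show ?thesis
    using v_diff_diff_le[of "x - s ^ p" "(z - s) ^ p" "z ^ p - s ^ p - (z - s) ^ p"]
      v_frobenius_diff_error_le[OF assms(1,3,2)]
    by (simp add: v_power)
qed

lemma value_group_pos: "g \<in> value_group v \<Longrightarrow> g > 0"
  unfolding value_group_def using v_pos by blast

lemma exists_pth_power_approx:
  assumes divisible: "value_group_p_divisible v p" and perfect: "residue_field_perfect v p"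
    and p: "p > 0" and a: "v a \<le> 1" "a \<noteq> 0"
  shows "\<exists>t. v t \<le> 1 \<and> v (a - t ^ p) < v a"
proof -
  have "v a \<in> value_group v"
    unfolding value_group_def using a by blast
  then obtain c where c: "c \<noteq> 0" "v c ^ p = v a"
    using divisible unfolding value_group_p_divisible_def value_group_def by blast
  have c_le_1: "v c \<le> 1"
    using power_le_one_iff[OF v_nonneg, of c p] c(2) a(1) p by simp
  define u where "u = a / c ^ p"
  have a_eq: "a = c ^ p * u"
    unfolding u_def using c(1) by simp
  then have "v u = 1"
    using c v_pos[OF a(2)] by (simp add: v_mult v_power v_eq_0_iff)
  then obtain d where d: "v d \<le> 1" "v (d ^ p - u) < 1"
    using perfect unfolding residue_field_perfect_def by (metis order_refl)
  have "a - (c * d) ^ p = c ^ p * (u - d ^ p)"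
    unfolding a_eq by (simp add: power_mult_distrib right_diff_distrib)
  then have "v (a - (c * d) ^ p) = v a * v (d ^ p - u)"
    using c(2) by (simp add: v_mult v_power v_diff_commute[of u])
  also have "\<dots> < v a"
    using d(2) v_pos[OF a(2)] by simp
  finally show ?thesis
    using c_le_1 d(1) by (intro exI[of _ "c * d"]) (simp add: v_mult mult_le_one v_nonneg)
qed

lemma improve_pth_power_approx:
  assumes divisible: "value_group_p_divisible v p" and perfect: "residue_field_perfect v p"
    and p: "prime p" and x: "v x \<le> 1" and s: "v s \<le> 1"
    and far: "v (of_nat p) < v (x - s ^ p)"
  shows "\<exists>s'. v s' \<le> 1 \<and> v (x - s' ^ p) < v (x - s ^ p)"
proof -
  define a where "a = x - s ^ p"
  have "a \<noteq> 0"
    using far v_nonneg[of "of_nat p"] unfolding a_def by auto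
  moreover have "v a \<le> 1"
    unfolding a_def using x v_power_le_1[OF s, of p] by (simp add: order_trans[OF v_diff_le])
  ultimately obtain t where t: "v t \<le> 1" "v (a - t ^ p) < v a"
    using exists_pth_power_approx[OF divisible perfect prime_gt_0_nat[OF p]] by blast
  have "x - (s + t) ^ p = (a - t ^ p) - ((s + t) ^ p - s ^ p - t ^ p)"
    unfolding a_def by (simp add: algebra_simps)
  then have "v (x - (s + t) ^ p) < v a"
    using v_diff_le[of "a - t ^ p" "(s + t) ^ p - s ^ p - t ^ p"] t(2)
      v_frobenius_add_error_le[OF p s t(1)] far unfolding a_def by simp
  moreover have "v (s + t) \<le> 1"
    using v_add_le[of s t] s t(1) by simp
  ultimately show ?thesis
    unfolding a_def by blast
qed

lemma spherically_complete_common_point: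
  assumes sc: "spherically_complete v" and pos: "\<And>n. \<rho> n > 0"
    and mono: "\<And>n. \<rho> (Suc n) \<le> \<rho> n" and steps: "\<And>n. v (s (Suc n) - s n) \<le> \<rho> n"
  shows "\<exists>z. \<forall>n. v (z - s n) \<le> \<rho> n"
proof -
  have "closed_ball_v v (s (Suc n)) (\<rho> (Suc n)) \<subseteq> closed_ball_v v (s n) (\<rho> n)" for n
  proof
    fix y assume "y \<in> closed_ball_v v (s (Suc n)) (\<rho> (Suc n))"
    then have "v (y - s (Suc n)) \<le> \<rho> n"
      using mono[of n] by (simp add: closed_ball_v_def)
    moreover have "y - s n = (y - s (Suc n)) + (s (Suc n) - s n)"
      by simp
    ultimately show "y \<in> closed_ball_v v (s n) (\<rho> n)"
      using steps[of n] v_add_le[of "y - s (Suc n)" "s (Suc n) - s n"]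
      by (simp add: closed_ball_v_def)
  qed
  then have "(\<Inter>n. closed_ball_v v (s n) (\<rho> n)) \<noteq> {}"
    using sc pos unfolding spherically_complete_def by blast
  then show ?thesis
    unfolding closed_ball_v_def by blast
qed

lemma spherically_complete_pth_power_approx_limit:
  assumes sc: "spherically_complete v" and p: "prime p"
    and s: "\<And>n. v (s n) \<le> 1" and approx: "\<And>n. v (x - s n ^ p) < \<delta> n"
    and \<delta>_mono: "\<And>n. \<delta> (Suc n) \<le> \<delta> n" and \<delta>_gt: "\<And>n. v (of_nat p) < \<delta> n"
  shows "\<exists>z. v z \<le> 1 \<and> (\<forall>n. v (x - z ^ p) \<le> \<delta> n)"
proof -
  \<comment> \<open>The cap at 1 keeps the common point in O, where Frobenius is additive modulo p.\<close>
  define \<rho> where "\<rho> n = min 1 (root p (\<delta> n))" for n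
  have p0: "p > 0"
    using p prime_gt_0_nat by blast
  have le_\<rho>_iff: "v a \<le> \<rho> n \<longleftrightarrow> v a \<le> 1 \<and> v a ^ p \<le> \<delta> n" for a n
    by (simp add: \<rho>_def le_real_root_iff_power_le[OF p0 v_nonneg])
  have "v (s (Suc n) - s n) \<le> \<rho> n" for n
  proof -
    have "v (s (Suc n) - s n) \<le> 1"
      using s[of n] s[of "Suc n"] by (simp add: order_trans[OF v_diff_le])
    moreover have "v (s (Suc n) - s n) ^ p \<le> \<delta> n"
      using v_diff_pth_power_le[OF p s s, of "Suc n" n x] approx[of n] approx[of "Suc n"]
        \<delta>_mono[of n] \<delta>_gt[of n] by linarith
    ultimately show ?thesis
      unfolding le_\<rho>_iff by blast
  qed
  moreover have "\<rho> n > 0" "\<rho> (Suc n) \<le> \<rho> n" for n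
    using \<delta>_gt[of n] v_nonneg[of "of_nat p"] \<delta>_mono p0
    by (auto simp: \<rho>_def real_root_gt_zero min.coboundedI2)
  ultimately obtain z where z: "\<And>n. v (z - s n) \<le> \<rho> n"
    using spherically_complete_common_point[OF sc] by metis
  have z_le_1: "v z \<le> 1"
    using v_add_le[of "z - s 0" "s 0"] z[of 0] s[of 0]
    by (simp add: \<rho>_def max_def split: if_splits)
  have "v (x - z ^ p) \<le> \<delta> n" for n
    using v_sub_pth_power_le[OF p s z_le_1, of x n] approx[of n] z[of n] \<delta>_gt[of n]
    unfolding le_\<rho>_iff by (simp add: max_def split: if_splits)
  then show ?thesis
    using z_le_1 by blast
qed

lemma exists_best_pth_power_approx:
  assumes sc: "spherically_complete v" and p: "prime p" and x: "v x \<le> 1"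
  shows "\<exists>z. v z \<le> 1 \<and> (\<forall>y. v y \<le> 1 \<longrightarrow> v (x - z ^ p) \<le> max (v (x - y ^ p)) (v (of_nat p)))"
proof -
  define F where "F = {v (x - y ^ p) | y. v y \<le> 1}"
  define m where "m = max (Inf F) (v (of_nat p))"
  define \<delta> where "\<delta> n = m + inverse (real (Suc n))" for n
  have "v (x - 0 ^ p) \<in> F"
    unfolding F_def by force
  then have F_ne: "F \<noteq> {}" by blast
  have F_bdd: "bdd_below F"
    unfolding F_def bdd_below_def using v_nonneg by blast
  have \<delta>_gt: "m < \<delta> n" "v (of_nat p) < \<delta> n" for n
    using max.cobounded2[of "v (of_nat p)" "Inf F"] positive_imp_inverse_positive[of "real (Suc n)"]
    unfolding \<delta>_def m_def by linarith+
  have "\<forall>n. \<exists>y. v y \<le> 1 \<and> v (x - y ^ p) < \<delta> n"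
  proof
    fix n
    have "Inf F < \<delta> n"
      using \<delta>_gt(1)[of n] by (simp add: m_def)
    then show "\<exists>y. v y \<le> 1 \<and> v (x - y ^ p) < \<delta> n"
      using cInf_lessD[OF F_ne] unfolding F_def by blast
  qed
  then obtain s where "\<And>n. v (s n) \<le> 1" "\<And>n. v (x - s n ^ p) < \<delta> n"
    by metis
  moreover have "\<delta> (Suc n) \<le> \<delta> n" for n
    by (simp add: \<delta>_def le_imp_inverse_le)
  ultimately obtain z where z: "v z \<le> 1" "\<And>n. v (x - z ^ p) \<le> \<delta> n"
    using spherically_complete_pth_power_approx_limit[OF sc p] \<delta>_gt(2) by metis
  then have "v (x - z ^ p) \<le> m"
    using LIMSEQ_le_const[OF LIMSEQ_inverse_real_of_nat_add[of m]] unfolding \<delta>_def by blast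
  moreover have "m \<le> max (v (x - y ^ p)) (v (of_nat p))" if "v y \<le> 1" for y
  proof -
    have "Inf F \<le> v (x - y ^ p)"
      using that F_bdd by (intro cInf_lower) (auto simp: F_def)
    then show ?thesis by (auto simp: m_def)
  qed
  ultimately show ?thesis
    using z(1) by (blast intro: order_trans)
qed

lemma frobenius_surj_mod_p_if_spherically_complete:
  assumes sc: "spherically_complete v" and p: "prime p"
    and divisible: "value_group_p_divisible v p" and perfect: "residue_field_perfect v p"
  shows "frobenius_surj_mod_p v p"
  unfolding frobenius_surj_mod_p_def
proof (intro allI impI)
  fix x assume x: "v x \<le> 1"
  then obtain z where z: "v z \<le> 1"
    and best: "\<And>y. v y \<le> 1 \<Longrightarrow> v (x - z ^ p) \<le> max (v (x - y ^ p)) (v (of_nat p))"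
    using exists_best_pth_power_approx[OF sc p] by blast
  have "v (x - z ^ p) \<le> v (of_nat p)"
  proof (rule ccontr)
    assume far: "\<not> v (x - z ^ p) \<le> v (of_nat p)"
    then obtain z' where "v z' \<le> 1" "v (x - z' ^ p) < v (x - z ^ p)"
      using improve_pth_power_approx[OF divisible perfect p x z] by auto
    then show False
      using best[of z'] far by linarith
  qed
  then show "\<exists>y. v y \<le> 1 \<and> v (y ^ p - x) \<le> v (of_nat p)"
    using z by (auto simp: v_diff_commute[of x])
qed

lemma value_group_nondiscrete_if_p_divisible:
  assumes nontrivial: "nontrivial_abs v" and divisible: "value_group_p_divisible v p"
    and p: "p > 1"
  shows "value_group_nondiscrete v"
  unfolding value_group_nondiscrete_def
proof (intro allI impI)
  fix e :: real assume "e > 0"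
  obtain x0 where x0: "x0 \<noteq> 0" "v x0 \<noteq> 1"
    using nontrivial unfolding nontrivial_abs_def by blast
  define g where "g = v x0"
  have g: "g \<in> value_group v" "g \<noteq> 1"
    unfolding g_def value_group_def using x0 by auto
  have "strict_mono (\<lambda>n. p ^ n)"
    using p by (intro strict_monoI power_strict_increasing)
  then have "(\<lambda>n. root (p ^ n) g) \<longlonglongrightarrow> 1"
    using LIMSEQ_subseq_LIMSEQ[OF LIMSEQ_root_const[OF value_group_pos[OF g(1)]]]
    by (simp add: o_def)
  then obtain n where n: "\<bar>root (p ^ n) g - 1\<bar> < e"
    using LIMSEQ_D[OF _ \<open>e > 0\<close>] by fastforce
  obtain h where h: "h \<in> value_group v" "h ^ (p ^ n) = g"
    using value_group_iterated_root[OF divisible g(1)] by blast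
  have "root (p ^ n) g = h"
    using p h value_group_pos[OF h(1)] by (intro real_root_pos_unique) auto
  moreover have "h \<noteq> 1"
    using h(2) g(2) by auto
  ultimately show "\<exists>g\<in>value_group v. g \<noteq> 1 \<and> \<bar>g - 1\<bar> < e"
    using h(1) n by auto
qed

end

theorem theorem5p5:
  fixes v :: "'a::field \<Rightarrow> real" and p :: nat
  assumes "prime p"
    and "nonarch_field v"
    and "spherically_complete v"
    and "residue_char v p"
    and "value_group_p_divisible v p"
    and "residue_field_perfect v p"
  shows "perfectoid_field v"
proof -
  have "nonarch_abs v" and nontrivial: "nontrivial_abs v"
    using assms(2) unfolding nonarch_field_def by auto
  then interpret ultrametric_field v
    by unfold_locales
  have "frobenius_surj_mod_p v p"
    using frobenius_surj_mod_p_if_spherically_complete[OF assms(3,1,5,6)] .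
  moreover have "value_group_nondiscrete v"
    using value_group_nondiscrete_if_p_divisible[OF nontrivial assms(5)] assms(1) prime_gt_1_nat
    by blast
  ultimately show ?thesis
    unfolding perfectoid_field_def using assms(1,2,4) by blast
qed

end
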